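(* Let $l\ge1$ and work in $\mathfrak{OA}_{1,2l}=\mathfrak{OA}/\mathfrak I_{(t-1)^{2l}}$, writing $X_k,Y_k$ for the images. The operator $\mathrm{ad}\,X_0$ on $\mathfrak{OA}_{1,2l}$ is diagonalizable with eigenvalues $0,4,-4$, each eigenspace being $l$-dimensional, with bases: eigenvalue $0$: $X_0$ and $\sum_{k=2j-2}^{2l-1}(-1)^k\binom{k-1}{2j-4}X_k$ for $2\le j\le l$; eigenvalue $\pm4$: $2Y_{2j-1}\pm\Big(X_{2j-1}-\sum_{k=2j-1}^{2l-1}(-1)^k\binom{k-1}{2j-2}X_k\Big)$ for $1\le j\le l$. Moreover the $0$-eigenvectors commute with each other.
   Context: Work over $\mathbb C$. $\mathfrak{sl}_2$ has basis $e,f,h$ with $[e,f]=h$, $[h,e]=2e$, $[h,f]=-2f$. The Onsager algebra is the Lie subalgebra $\mathfrak{OA}=\{p(t)e+p(t^{-1})f+q(t)h:\ p,q\in\mathbb C[t,t^{-1}],\ q(t^{-1})=-q(t)\}$ of the loop algebra $\mathbb C[t,t^{-1}]\otimes\mathfrak{sl}_2$ (bracket $[px,qy]=pq[x,y]$). $\mathfrak I_{(t-1)^L}=\{p(t)e+p(t^{-1})f+q(t)h\in\mathfrak{OA}: p,q\in(t-1)^L\mathbb C[t,t^{-1}]\}$. For $k\ge0$, $X_k=2(t-1)^ke+2(t^{-1}-1)^kf$ and $Y_k=(-1)^k\big((t-1)^k-(t^{-1}-1)^k\big)h$, elements of $\mathfrak{OA}$. $\binom xa=x(x-1)\cdots(x-a+1)/a!$,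 $\binom x0=1$. *)

theory Defs
  imports Complex_Main "HOL-Computational_Algebra.Polynomial"
    "HOL-Library.Function_Algebras" "HOL-Library.Product_Plus"
begin

text \<open>Laurent polynomials in t are represented by the functions they induce on the
nonzero complex numbers (value 0 forced at z = 0), which is an injective
representation of C[t,t^-1].  An element p e + q f + r h of the loop algebra
C[t,t^-1] (x) sl2 is the triple (p, q, r).\<close>

type_synonym lp = "complex \<Rightarrow> complex"
type_synonym oa_elt = "lp \<times> lp \<times> lp"

definition mask :: "lp \<Rightarrow> lp" where
  "mask g = (\<lambda>z. if z = 0 then 0 else g z)"

definition laurent :: "lp \<Rightarrow> bool" where
  "laurent p \<longleftrightarrow> (\<exists>P::complex poly. \<exists>n::nat. p = mask (\<lambda>z. poly P z / z ^ n))"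

definition inv_arg :: "lp \<Rightarrow> lp" where
  "inv_arg p = (\<lambda>z. p (inverse z))"

text \<open>Loop algebra bracket: [e,f]=h, [h,e]=2e, [h,f]=-2f, coefficients multiply.\<close>
definition loop_bracket :: "oa_elt \<Rightarrow> oa_elt \<Rightarrow> oa_elt" where
  "loop_bracket x y = (case x of (a1, b1, c1) \<Rightarrow> case y of (a2, b2, c2) \<Rightarrow>
     (2 * (c1 * a2 - a1 * c2), 2 * (b1 * c2 - c1 * b2), a1 * b2 - b1 * a2))"

definition elt_scale :: "complex \<Rightarrow> oa_elt \<Rightarrow> oa_elt" where
  "elt_scale c x = (case x of (a, b, d) \<Rightarrow> ((\<lambda>z. c * a z), (\<lambda>z. c * b z), (\<lambda>z. c * d z)))"

definition Onsager :: "oa_elt set" where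
  "Onsager = {(p, q, r). laurent p \<and> q = inv_arg p \<and> laurent r \<and> inv_arg r = - r}"

definition onsager_ideal :: "nat \<Rightarrow> oa_elt set" where
  "onsager_ideal L = {(p, q, r). (p, q, r) \<in> Onsager \<and>
     (\<exists>u v. laurent u \<and> laurent v \<and> p = (\<lambda>z. (z - 1) ^ L * u z) \<and> r = (\<lambda>z. (z - 1) ^ L * v z))}"

definition Xel :: "nat \<Rightarrow> oa_elt" where
  "Xel k = (mask (\<lambda>z. 2 * (z - 1) ^ k), mask (\<lambda>z. 2 * (inverse z - 1) ^ k), 0)"

definition Yel :: "nat \<Rightarrow> oa_elt" where
  "Yel k = (0, 0, mask (\<lambda>z. (-1) ^ k * ((z - 1) ^ k - (inverse z - 1) ^ k)))"

definition zero_vec :: "nat \<Rightarrow> nat \<Rightarrow> oa_elt" where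
  "zero_vec l j = (if j = 1 then Xel 0 else
     (\<Sum>k\<in>{2*j-2..2*l-1}. elt_scale ((-1) ^ k * of_nat ((k - 1) choose (2*j-4))) (Xel k)))"

definition pm_vec :: "nat \<Rightarrow> complex \<Rightarrow> nat \<Rightarrow> oa_elt" where
  "pm_vec l s j = elt_scale 2 (Yel (2*j-1)) + elt_scale s (Xel (2*j-1) -
     (\<Sum>k\<in>{2*j-1..2*l-1}. elt_scale ((-1) ^ k * of_nat ((k - 1) choose (2*j-2))) (Xel k)))"

end

(*
  Write an element of OA as p e + p(t^-1) f + r h with r(t^-1) = -r(t); then ad X_0 sends
  (p, r) to (-4 r, 2 (p(t^-1) - p)). Modulo (t - 1)^2l a Laurent polynomial is a power series
  in u = t - 1 truncated below degree 2l, and (t^-1 - 1)^m = (-u / (1 + u))^m has the expansion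
  sum_(k >= m) (-1)^k C(k-1, m-1) u^k. By this expansion the e-coefficient Z_j of the j-th
  0-vector is invariant under t -> t^-1, while the e-coefficient W_j and the h-coefficient R_j of
  the j-th (+-4)-vectors satisfy W_j = -R_j and W_j(t^-1) - W_j = 2 R_j modulo (t - 1)^2l; this
  gives the eigenvector equations. The Z_j and W_j begin with u^(2j-2) and u^(2j-1), and the R_j
  with u^(2j-1), the only orders in which an r with r(t^-1) = -r(t) can begin. This triangularity
  makes the 3l vectors a basis of the quotient, and the eigenvalues and eigenspaces are then read
  off by comparing coefficients.
*)
theory Submission
  imports Defs
begin

section \<open>Laurent polynomials as functions\<close>

lemma laurentI:
  assumes "p 0 = 0" "\<And>z. z \<noteq> 0 \<Longrightarrow> p z = poly P z / z ^ n"
  shows "laurent p"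
  unfolding laurent_def by (intro exI[of _ P] exI[of _ n]) (auto simp: mask_def assms)

lemma laurentE:
  assumes "laurent p"
  obtains P n where "p 0 = 0" "\<And>z. z \<noteq> 0 \<Longrightarrow> p z = poly P z / z ^ n"
proof -
  obtain P n where "p = mask (\<lambda>z. poly P z / z ^ n)"
    using assms unfolding laurent_def by auto
  then show thesis by (intro that[of P n]) (simp_all add: mask_def)
qed

lemma laurent_at_0: "laurent p \<Longrightarrow> p 0 = 0"
  by (erule laurentE) auto

lemma laurent_add: "laurent p \<Longrightarrow> laurent q \<Longrightarrow> laurent (\<lambda>z. p z + q z)"
proof -
  assume p: "laurent p" and q: "laurent q"
  obtain P n where P: "p 0 = 0" "\<And>z. z \<noteq> 0 \<Longrightarrow> p z = poly P z / z ^ n"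
    using laurentE[OF p] by metis
  obtain Q m where Q: "q 0 = 0" "\<And>z. z \<noteq> 0 \<Longrightarrow> q z = poly Q z / z ^ m"
    using laurentE[OF q] by metis
  show ?thesis
    by (rule laurentI[where P="P * monom 1 m + Q * monom 1 n" and n="n + m"])
       (auto simp: P Q poly_monom field_simps power_add)
qed

lemma laurent_mult: "laurent p \<Longrightarrow> laurent q \<Longrightarrow> laurent (\<lambda>z. p z * q z)"
proof -
  assume p: "laurent p" and q: "laurent q"
  obtain P n where P: "p 0 = 0" "\<And>z. z \<noteq> 0 \<Longrightarrow> p z = poly P z / z ^ n"
    using laurentE[OF p] by metis
  obtain Q m where Q: "q 0 = 0" "\<And>z. z \<noteq> 0 \<Longrightarrow> q z = poly Q z / z ^ m"
    using laurentE[OF q] by metis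
  show ?thesis
    by (rule laurentI[where P="P * Q" and n="n + m"]) (auto simp: P Q field_simps power_add)
qed

lemma laurent_poly_mult: "laurent q \<Longrightarrow> laurent (\<lambda>z. poly P z * q z)"
proof -
  assume "laurent q"
  then obtain Q m where Q: "q 0 = 0" "\<And>z. z \<noteq> 0 \<Longrightarrow> q z = poly Q z / z ^ m"
    using laurentE[OF \<open>laurent q\<close>] by metis
  show ?thesis
    by (rule laurentI[where P="P * Q" and n=m]) (auto simp: Q field_simps)
qed

lemma laurent_scale: "laurent q \<Longrightarrow> laurent (\<lambda>z. c * q z)"
  using laurent_poly_mult[of q "[:c:]"] by simp

lemma laurent_diff: "laurent p \<Longrightarrow> laurent q \<Longrightarrow> laurent (\<lambda>z. p z - q z)"
  using laurent_add[of p "\<lambda>z. - q z"] laurent_scale[of q "-1"] by simp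

lemma laurent_zero: "laurent (\<lambda>z. 0)"
  by (rule laurentI[where P=0 and n=0]) auto

lemma laurent_sum: "(\<And>a. a \<in> A \<Longrightarrow> laurent (f a)) \<Longrightarrow> laurent (\<lambda>z. \<Sum>a\<in>A. f a z)"
  by (induction A rule: infinite_finite_induct) (simp_all add: laurent_zero laurent_add)

lemma laurent_inv_arg: "laurent p \<Longrightarrow> laurent (inv_arg p)"
proof -
  assume "laurent p"
  then obtain P n where P: "p 0 = 0" "\<And>z. z \<noteq> 0 \<Longrightarrow> p z = poly P z / z ^ n"
    using laurentE by metis
  show ?thesis
  proof (rule laurentI[where P="reflect_poly P * monom 1 n" and n="degree P"])
    fix z :: complex
    assume "z \<noteq> 0"
    then show "inv_arg p z = poly (reflect_poly P * monom 1 n) z / z ^ degree P"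
      by (simp add: inv_arg_def P poly_reflect_poly_nz poly_monom field_simps power_inverse)
  qed (simp add: inv_arg_def P)
qed

lemma laurent_mask_poly: "laurent (mask (\<lambda>z. poly P z))"
  by (rule laurentI[where P=P and n=0]) (auto simp: mask_def)

lemma laurent_mask_inverse_power: "laurent (mask (\<lambda>z. inverse z ^ k))"
  by (rule laurentI[where P=1 and n=k]) (auto simp: mask_def field_simps power_inverse)

lemma laurent_eq_0_cofinite:
  assumes g: "laurent g" and F: "finite F" and zero: "\<And>z. z \<notin> F \<Longrightarrow> g z = 0"
  shows "g w = 0"
proof -
  obtain P n where P: "g 0 = 0" "\<And>z. z \<noteq> 0 \<Longrightarrow> g z = poly P z / z ^ n"
    using laurentE[OF g] by metis
  have "P = 0"
  proof (rule ccontr)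
    assume "P \<noteq> 0"
    then have "finite (F \<union> {0} \<union> {x. poly P x = 0})" using F poly_roots_finite by simp
    then obtain y :: complex where y: "y \<notin> F \<union> {0} \<union> {x. poly P x = 0}"
      using ex_new_if_finite[OF infinite_UNIV_char_0] by meson
    have "g y = poly P y / y ^ n" using y by (intro P(2)) simp
    with y zero[of y] show False by simp
  qed
  with P show ?thesis by (cases "w = 0") simp_all
qed


definition one_lp :: lp where
  "one_lp = mask (\<lambda>z. 1)"

definition tm1_pow :: "nat \<Rightarrow> lp" where
  "tm1_pow k = mask (\<lambda>z. (z - 1) ^ k)"

definition itm1_pow :: "nat \<Rightarrow> lp" where
  "itm1_pow k = mask (\<lambda>z. (inverse z - 1) ^ k)"


lemma one_lp_1 [simp]: "one_lp 1 = 1"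
  by (simp add: one_lp_def mask_def)

lemma laurent_one_lp: "laurent one_lp"
  using laurent_mask_poly[of 1] by (simp add: one_lp_def)

lemma one_lp_mult: "laurent f \<Longrightarrow> one_lp z * f z = f z"
  using laurent_at_0[of f] by (cases "z = 0") (auto simp: one_lp_def mask_def)

lemma inv_arg_one_lp: "inv_arg one_lp = one_lp"
  by (auto simp: inv_arg_def one_lp_def mask_def)

lemma tm1_pow_0: "tm1_pow 0 = one_lp"
  by (simp add: tm1_pow_def one_lp_def)

lemma tm1_pow_eq: "tm1_pow k z = (z - 1) ^ k * one_lp z"
  by (simp add: tm1_pow_def one_lp_def mask_def)

lemma laurent_tm1_pow: "laurent (tm1_pow k)"
  using laurent_mask_poly[of "[:-1, 1:] ^ k"] by (simp add: tm1_pow_def)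

lemma inv_arg_tm1_pow: "inv_arg (tm1_pow k) = itm1_pow k"
  by (auto simp: inv_arg_def tm1_pow_def itm1_pow_def mask_def)

lemma laurent_itm1_pow: "laurent (itm1_pow k)"
  using laurent_inv_arg[OF laurent_tm1_pow] by (simp add: inv_arg_tm1_pow)

lemma tm1_pow_inverse: "tm1_pow k (inverse z) = itm1_pow k z"
  by (simp add: tm1_pow_def itm1_pow_def mask_def)

lemma itm1_pow_inverse: "itm1_pow k (inverse z) = tm1_pow k z"
  by (simp add: tm1_pow_def itm1_pow_def mask_def)

section \<open>Divisibility by powers of t - 1\<close>

definition vanishes_to :: "nat \<Rightarrow> lp \<Rightarrow> bool" where
  "vanishes_to N f \<longleftrightarrow> (\<exists>u. laurent u \<and> f = (\<lambda>z. (z - 1) ^ N * u z))"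

lemma vanishes_toI: "laurent u \<Longrightarrow> vanishes_to N (\<lambda>z. (z - 1) ^ N * u z)"
  unfolding vanishes_to_def by auto

lemma vanishes_to_cong: "vanishes_to N f \<Longrightarrow> (\<And>z. f z = g z) \<Longrightarrow> vanishes_to N g"
  by (metis ext)

lemma laurent_tm1_power_mult: "laurent u \<Longrightarrow> laurent (\<lambda>z. (z - 1) ^ N * u z)"
  using laurent_poly_mult[of u "[:-1, 1:] ^ N"] by simp

lemma vanishes_to_laurent: "vanishes_to N f \<Longrightarrow> laurent f"
  unfolding vanishes_to_def using laurent_tm1_power_mult by auto

lemma vanishes_to_0: "laurent f \<Longrightarrow> vanishes_to 0 f"
  unfolding vanishes_to_def by auto

lemma vanishes_to_add: "vanishes_to N f \<Longrightarrow> vanishes_to N g \<Longrightarrow> vanishes_to N (\<lambda>z. f z + g z)"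
proof -
  assume "vanishes_to N f" "vanishes_to N g"
  then obtain u v where "laurent u" "f = (\<lambda>z. (z - 1) ^ N * u z)"
    and "laurent v" "g = (\<lambda>z. (z - 1) ^ N * v z)"
    unfolding vanishes_to_def by auto
  then show ?thesis
    unfolding vanishes_to_def
    by (intro exI[where x="\<lambda>z. u z + v z"]) (auto intro: laurent_add simp: algebra_simps)
qed

lemma vanishes_to_mult_left: "laurent g \<Longrightarrow> vanishes_to N f \<Longrightarrow> vanishes_to N (\<lambda>z. g z * f z)"
proof -
  assume "laurent g" "vanishes_to N f"
  then obtain u where "laurent u" "f = (\<lambda>z. (z - 1) ^ N * u z)"
    unfolding vanishes_to_def by auto
  with \<open>laurent g\<close> show ?thesis
    unfolding vanishes_to_def
    by (intro exI[where x="\<lambda>z. g z * u z"]) (auto intro: laurent_mult simp: algebra_simps)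
qed

lemma vanishes_to_scale: "vanishes_to N f \<Longrightarrow> vanishes_to N (\<lambda>z. c * f z)"
  using vanishes_to_mult_left[of "\<lambda>z. c * one_lp z" N f]
  by (auto intro: vanishes_to_cong laurent_scale laurent_one_lp
      simp: one_lp_mult[OF vanishes_to_laurent] mult.assoc)

lemma vanishes_to_diff: "vanishes_to N f \<Longrightarrow> vanishes_to N g \<Longrightarrow> vanishes_to N (\<lambda>z. f z - g z)"
  using vanishes_to_add[of N f "\<lambda>z. - g z"] vanishes_to_scale[of N g "-1"] by simp

lemma vanishes_to_zero: "vanishes_to N (\<lambda>z. 0)"
  using vanishes_toI[OF laurent_zero, of N] by simp

lemma vanishes_to_sum:
  "(\<And>a. a \<in> A \<Longrightarrow> vanishes_to N (f a)) \<Longrightarrow> vanishes_to N (\<lambda>z. \<Sum>a\<in>A. f a z)"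
  by (induction A rule: infinite_finite_induct) (simp_all add: vanishes_to_zero vanishes_to_add)

lemma vanishes_to_mult:
  "vanishes_to a f \<Longrightarrow> vanishes_to b g \<Longrightarrow> vanishes_to (a + b) (\<lambda>z. f z * g z)"
proof -
  assume "vanishes_to a f" "vanishes_to b g"
  then obtain u v where "laurent u" "f = (\<lambda>z. (z - 1) ^ a * u z)"
    and "laurent v" "g = (\<lambda>z. (z - 1) ^ b * v z)"
    unfolding vanishes_to_def by auto
  then show ?thesis
    unfolding vanishes_to_def
    by (intro exI[where x="\<lambda>z. u z * v z"]) (auto intro: laurent_mult simp: algebra_simps power_add)
qed

lemma vanishes_to_mono: "vanishes_to N f \<Longrightarrow> M \<le> N \<Longrightarrow> vanishes_to M f"
proof -
  assume "vanishes_to N f" "M \<le> N"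
  then obtain u d where u: "laurent u" "f = (\<lambda>z. (z - 1) ^ N * u z)" and d: "N = M + d"
    unfolding vanishes_to_def using le_Suc_ex by blast
  show "vanishes_to M f" unfolding vanishes_to_def
    by (rule exI[where x="\<lambda>z. (z - 1) ^ d * u z"]) (auto simp: u d laurent_tm1_power_mult power_add)
qed

lemma vanishes_to_sum_higher:
  assumes "\<And>i. i \<in> A \<Longrightarrow> m \<le> i \<and> vanishes_to i (f i)"
  shows "vanishes_to m (\<lambda>z. \<Sum>i\<in>A. c i * f i z)"
  using assms by (intro vanishes_to_sum vanishes_to_scale) (auto intro: vanishes_to_mono)

lemma vanishes_to_tm1_pow: "vanishes_to k (tm1_pow k)"
  unfolding tm1_pow_eq by (rule vanishes_toI[OF laurent_one_lp])

lemma vanishes_to_inv_arg: "vanishes_to N f \<Longrightarrow> vanishes_to N (inv_arg f)"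
proof -
  assume "vanishes_to N f"
  then obtain u where u: "laurent u" "f = (\<lambda>z. (z - 1) ^ N * u z)"
    unfolding vanishes_to_def by auto
  have "laurent (\<lambda>z. (-1) ^ N * (mask (\<lambda>z. inverse z ^ N) z * inv_arg u z))"
    by (intro laurent_scale laurent_mult laurent_mask_inverse_power laurent_inv_arg u)
  moreover have "inv_arg f z = (z - 1) ^ N * ((-1) ^ N * (mask (\<lambda>z. inverse z ^ N) z * inv_arg u z))"
    for z :: complex
  proof (cases "z = 0")
    case True
    then show ?thesis using laurent_at_0[OF u(1)] by (simp add: inv_arg_def u mask_def)
  next
    case False
    then have "inverse z - 1 = (-1) * (z - 1) * inverse z" by (simp add: field_simps)
    moreover have "(1 - z) ^ N = (-1) ^ N * (z - 1) ^ N"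
      by (metis minus_diff_eq mult_minus1 power_mult_distrib)
    ultimately show ?thesis
      using False by (simp add: inv_arg_def u mask_def power_mult_distrib)
  qed
  ultimately show ?thesis
    unfolding vanishes_to_def by blast
qed

lemma vanishes_to_1: "laurent f \<Longrightarrow> f 1 = 0 \<Longrightarrow> vanishes_to 1 f"
proof -
  assume f: "laurent f" "f 1 = 0"
  obtain P n where P: "f 0 = 0" "\<And>z. z \<noteq> 0 \<Longrightarrow> f z = poly P z / z ^ n"
    using laurentE[OF f(1)] by metis
  have "poly P 1 = 0" using P(2)[of 1] f(2) by simp
  then obtain Q where Q: "P = [:-1, 1:] * Q"
    using poly_eq_0_iff_dvd[of P 1] by (auto elim: dvdE)
  have "laurent (mask (\<lambda>z. poly Q z / z ^ n))" unfolding laurent_def by blast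
  moreover have "f z = (z - 1) ^ 1 * mask (\<lambda>z. poly Q z / z ^ n) z" for z
    by (cases "z = 0") (simp_all add: P Q mask_def algebra_simps)
  ultimately show ?thesis
    unfolding vanishes_to_def by blast
qed

lemma vanishes_to_cancel_z: "vanishes_to N (\<lambda>z. z * f z) \<Longrightarrow> laurent f \<Longrightarrow> vanishes_to N f"
proof -
  assume "vanishes_to N (\<lambda>z. z * f z)" "laurent f"
  from vanishes_to_mult_left[OF laurent_mask_inverse_power[of 1] this(1)] show ?thesis
    by (rule vanishes_to_cong) (use laurent_at_0[OF \<open>laurent f\<close>] in \<open>simp add: mask_def\<close>)
qed

definition lead_term :: "nat \<Rightarrow> complex \<Rightarrow> lp \<Rightarrow> bool" where
  "lead_term k \<alpha> f \<longleftrightarrow> vanishes_to (Suc k) (\<lambda>z. f z - \<alpha> * tm1_pow k z)"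

lemma lead_term_0_iff: "lead_term k 0 f \<longleftrightarrow> vanishes_to (Suc k) f"
  by (simp add: lead_term_def)

lemma lead_term_vanishes_to: "lead_term k \<alpha> f \<Longrightarrow> vanishes_to k f"
proof -
  assume "lead_term k \<alpha> f"
  then have "vanishes_to k (\<lambda>z. f z - \<alpha> * tm1_pow k z)"
    unfolding lead_term_def by (rule vanishes_to_mono) simp
  from vanishes_to_add[OF this vanishes_to_scale[OF vanishes_to_tm1_pow, where c=\<alpha>]]
  show ?thesis
    by simp
qed

lemma lead_term_scale: "lead_term k \<alpha> f \<Longrightarrow> lead_term k (c * \<alpha>) (\<lambda>z. c * f z)"
  unfolding lead_term_def by (drule vanishes_to_scale[where c=c]) (simp add: algebra_simps)

lemma lead_term_diff:
  "lead_term k \<alpha> f \<Longrightarrow> lead_term k \<beta> g \<Longrightarrow> lead_term k (\<alpha> - \<beta>) (\<lambda>z. f z - g z)"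
  unfolding lead_term_def by (drule (1) vanishes_to_diff) (simp add: algebra_simps)

lemma lead_term_cong:
  "lead_term k \<alpha> f \<Longrightarrow> \<alpha> = \<beta> \<Longrightarrow> (\<And>z. f z = g z) \<Longrightarrow> lead_term k \<beta> g"
  by (metis ext)

lemma vanishes_to_lead_term: "vanishes_to k f \<Longrightarrow> \<exists>\<alpha>. lead_term k \<alpha> f"
proof -
  assume "vanishes_to k f"
  then obtain u where u: "laurent u" "f = (\<lambda>z. (z - 1) ^ k * u z)"
    unfolding vanishes_to_def by auto
  have "vanishes_to 1 (\<lambda>z. u z - u 1 * one_lp z)"
    by (rule vanishes_to_1) (auto intro!: laurent_diff laurent_scale u laurent_one_lp)
  from vanishes_to_mult[OF vanishes_to_tm1_pow[of k] this]
  have "vanishes_to (Suc k) (\<lambda>z. tm1_pow k z * (u z - u 1 * one_lp z))"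
    by simp
  then have "lead_term k (u 1) f"
    unfolding lead_term_def
    by (rule vanishes_to_cong)
      (use laurent_at_0[OF u(1)] in \<open>simp add: u tm1_pow_def one_lp_def mask_def algebra_simps\<close>)
  then show ?thesis ..
qed

lemma lead_term_eq_0:
  assumes lead: "lead_term k \<alpha> f" and f: "vanishes_to (Suc k) f"
  shows "\<alpha> = 0"
proof -
  have "vanishes_to (Suc k) (\<lambda>z. \<alpha> * tm1_pow k z)"
    using vanishes_to_diff[OF f lead[unfolded lead_term_def]] by simp
  then obtain u where u: "laurent u" "(\<lambda>z. \<alpha> * tm1_pow k z) = (\<lambda>z. (z - 1) ^ Suc k * u z)"
    unfolding vanishes_to_def by auto
  have g: "laurent (\<lambda>z. \<alpha> * one_lp z - (z - 1) * u z)"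
    using laurent_diff[OF laurent_scale[OF laurent_one_lp] laurent_tm1_power_mult[OF u(1), of 1]]
    by simp
  have "\<alpha> * one_lp 1 - (1 - 1) * u 1 = 0"
  proof (rule laurent_eq_0_cofinite[OF g, of "{0, 1}"])
    fix z :: complex
    assume z: "z \<notin> {0, 1}"
    have "(z - 1) ^ k * (\<alpha> - (z - 1) * u z) = \<alpha> * tm1_pow k z - (z - 1) ^ Suc k * u z"
      using z by (simp add: tm1_pow_def mask_def algebra_simps)
    also have "\<dots> = 0" using fun_cong[OF u(2), of z] by simp
    finally show "\<alpha> * one_lp z - (z - 1) * u z = 0"
      using z by (simp add: one_lp_def mask_def)
  qed simp
  then show ?thesis by simp
qed

lemma lead_term_itm1_pow: "lead_term k ((-1) ^ k) (itm1_pow k)"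
proof -
  define w where "w = (\<lambda>z. (-1) ^ k * (mask (\<lambda>z. inverse z ^ k) z - one_lp z))"
  have "laurent w"
    unfolding w_def by (intro laurent_scale laurent_diff laurent_mask_inverse_power laurent_one_lp)
  then have "vanishes_to 1 w"
    by (rule vanishes_to_1) (simp add: w_def mask_def)
  from vanishes_to_mult[OF vanishes_to_tm1_pow[of k] this]
  have "vanishes_to (Suc k) (\<lambda>z. tm1_pow k z * w z)"
    by simp
  then show ?thesis
    unfolding lead_term_def
  proof (rule vanishes_to_cong)
    fix z :: complex
    show "tm1_pow k z * w z = itm1_pow k z - (-1) ^ k * tm1_pow k z"
    proof (cases "z = 0")
      case False
      then have "inverse z - 1 = (-1) * (z - 1) * inverse z" by (simp add: field_simps)
      then have "(inverse z - 1) ^ k = (-1) ^ k * (z - 1) ^ k * inverse z ^ k"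
        by (simp only: power_mult_distrib)
      with False show ?thesis
        by (simp add: w_def tm1_pow_def itm1_pow_def mask_def one_lp_def algebra_simps)
    qed (simp add: w_def tm1_pow_def itm1_pow_def mask_def one_lp_def)
  qed
qed

lemma lead_term_tm1_pow: "lead_term k 1 (tm1_pow k)"
  by (simp add: lead_term_def vanishes_to_zero)

lemma lead_term_unique: "lead_term k \<alpha> f \<Longrightarrow> lead_term k \<beta> f \<Longrightarrow> \<alpha> = \<beta>"
  using lead_term_eq_0[OF lead_term_diff, of k \<alpha> f \<beta> f] by (simp add: vanishes_to_zero)

lemma lead_term_inv_arg: "lead_term k \<alpha> f \<Longrightarrow> lead_term k ((-1) ^ k * \<alpha>) (inv_arg f)"
proof -
  assume "lead_term k \<alpha> f"
  from vanishes_to_inv_arg[OF this[unfolded lead_term_def]]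
  have "vanishes_to (Suc k) (\<lambda>z. inv_arg f z - \<alpha> * itm1_pow k z)"
    by (simp add: inv_arg_def tm1_pow_inverse)
  from lead_term_diff[OF this[folded lead_term_0_iff]
      lead_term_scale[OF lead_term_itm1_pow, where c="- \<alpha>"]]
  show ?thesis
    by (rule lead_term_cong) simp_all
qed

lemma triangular_independent:
  assumes lead: "\<And>k. k < N \<Longrightarrow> \<exists>\<alpha>. \<alpha> \<noteq> 0 \<and> lead_term k \<alpha> (f k)"
    and vanish: "vanishes_to N (\<lambda>z. \<Sum>k<N. c k * f k z)"
  shows "\<forall>k<N. c k = 0"
proof -
  have "k \<le> N \<Longrightarrow> \<forall>i<k. c i = 0" for k
  proof (induction k)
    case 0
    then show ?case by simp
  next
    case (Suc k)
    then have IH: "\<forall>i<k. c i = 0" and k: "k < N" by auto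
    define tail where "tail = (\<lambda>z. \<Sum>i\<in>{Suc k..<N}. c i * f i z)"
    have "vanishes_to (Suc k) tail"
      unfolding tail_def
      by (rule vanishes_to_sum_higher) (use lead lead_term_vanishes_to in fastforce)
    moreover have "(\<Sum>i<N. c i * f i z) = c k * f k z + tail z" for z
    proof -
      have "(\<Sum>i<N. c i * f i z) = (\<Sum>i<k. c i * f i z) + (\<Sum>i\<in>{k..<N}. c i * f i z)"
        using k by (simp add: lessThan_atLeast0 sum.atLeastLessThan_concat)
      also have "\<dots> = c k * f k z + tail z"
        using IH k by (simp add: tail_def sum.atLeast_Suc_lessThan)
      finally show ?thesis .
    qed
    moreover have "vanishes_to (Suc k) (\<lambda>z. \<Sum>i<N. c i * f i z)"
      using vanish k by (auto intro: vanishes_to_mono)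
    ultimately have "vanishes_to (Suc k) (\<lambda>z. c k * f k z)"
      using vanishes_to_diff[of "Suc k" "\<lambda>z. c k * f k z + tail z" tail] by simp
    moreover obtain \<alpha> where "\<alpha> \<noteq> 0" "lead_term k \<alpha> (f k)"
      using lead k by blast
    ultimately have "c k = 0"
      using lead_term_eq_0[OF lead_term_scale] by fastforce
    with IH show ?case
      using less_Suc_eq by auto
  qed
  then show ?thesis by auto
qed

text \<open>Greedy elimination of leading terms. Orders outside K need no basis element: there the
  invariant Q forces one more order of vanishing.\<close>

lemma triangular_span:
  assumes lead: "\<And>k. k < N \<Longrightarrow> k \<in> K \<Longrightarrow> \<exists>\<alpha>. \<alpha> \<noteq> 0 \<and> lead_term k \<alpha> (f k)"
    and skip: "\<And>G n. Q G \<Longrightarrow> vanishes_to n G \<Longrightarrow> n < N \<Longrightarrow> n \<notin> K \<Longrightarrow> vanishes_to (Suc n) G"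
    and closed: "\<And>G c k. Q G \<Longrightarrow> k \<in> K \<Longrightarrow> k < N \<Longrightarrow> Q (\<lambda>z. G z - c * f k z)"
    and laurent: "\<And>G. Q G \<Longrightarrow> laurent G"
    and F: "Q F"
  shows "\<exists>c. (\<forall>k. k \<notin> K \<longrightarrow> c k = 0) \<and> vanishes_to N (\<lambda>z. F z - (\<Sum>k<N. c k * f k z))"
proof -
  have "n \<le> N \<Longrightarrow> \<exists>c. (\<forall>k. k \<notin> K \<longrightarrow> c k = 0) \<and> Q (\<lambda>z. F z - (\<Sum>k<n. c k * f k z))
           \<and> vanishes_to n (\<lambda>z. F z - (\<Sum>k<n. c k * f k z))" for n
  proof (induction n)
    case 0
    show ?case by (rule exI[of _ "\<lambda>k. 0"]) (simp add: F vanishes_to_0 laurent)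
  next
    case (Suc n)
    then obtain c where c: "\<forall>k. k \<notin> K \<longrightarrow> c k = 0" "Q (\<lambda>z. F z - (\<Sum>k<n. c k * f k z))"
      "vanishes_to n (\<lambda>z. F z - (\<Sum>k<n. c k * f k z))" and n: "n < N"
      by auto
    define G where "G = (\<lambda>z. F z - (\<Sum>k<n. c k * f k z))"
    have upd: "(\<lambda>z. F z - (\<Sum>k<Suc n. (c(n := e)) k * f k z)) = (\<lambda>z. G z - e * f n z)" for e
      by (simp add: G_def sum.lessThan_Suc algebra_simps)
    show ?case
    proof (cases "n \<in> K")
      case False
      then have "vanishes_to (Suc n) G"
        using skip[of G n] c n by (simp add: G_def)
      with c False show ?thesis
        by (intro exI[of _ "c(n := 0)"]) (simp add: upd G_def)
    next
      case True
      obtain d where d: "lead_term n d G"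
        using vanishes_to_lead_term c(3) unfolding G_def by blast
      obtain \<alpha> where \<alpha>: "\<alpha> \<noteq> 0" "lead_term n \<alpha> (f n)"
        using lead True n by blast
      have "lead_term n (d - d / \<alpha> * \<alpha>) (\<lambda>z. G z - d / \<alpha> * f n z)"
        using lead_term_diff[OF d lead_term_scale[OF \<alpha>(2)]] .
      then have "vanishes_to (Suc n) (\<lambda>z. G z - d / \<alpha> * f n z)"
        using \<alpha>(1) by (simp add: lead_term_0_iff)
      moreover have "Q (\<lambda>z. G z - d / \<alpha> * f n z)"
        unfolding G_def by (rule closed[OF c(2) True n])
      ultimately show ?thesis
        using c True by (intro exI[of _ "c(n := d / \<alpha>)"]) (simp only: upd, simp)
    qed
  qed
  from this[of N] show ?thesis by auto
qed

section \<open>The expansion of (t^-1 - 1)^m in powers of t - 1\<close>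

text \<open>The truncation below degree N of the power series of (-u / (1 + u))^m, which is
  (t^-1 - 1)^m for u = t - 1.\<close>

definition inv_power_series :: "nat \<Rightarrow> nat \<Rightarrow> complex \<Rightarrow> complex" where
  "inv_power_series N m u = (\<Sum>k\<in>{m..<N}. (-1) ^ k * of_nat ((k - 1) choose (m - 1)) * u ^ k)"

lemma inv_power_series_Suc:
  assumes "1 \<le> m"
  shows "inv_power_series (Suc (Suc n)) m u
    = inv_power_series (Suc n) m u + (-1) ^ Suc n * of_nat (n choose (m - 1)) * u ^ Suc n"
proof (cases "m \<le> Suc n")
  case True
  then have "{m..<Suc (Suc n)} = insert (Suc n) {m..<Suc n}" by auto
  then show ?thesis unfolding inv_power_series_def by (simp add: add.commute)
next
  case False
  with assms have "n < m - 1" by simp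
  with False show ?thesis unfolding inv_power_series_def by simp
qed

lemma inv_power_series_1: "(1 + u) * inv_power_series (Suc n) 1 u = - u - (- u) ^ Suc n"
proof (induction n)
  case 0
  then show ?case by (simp add: inv_power_series_def)
next
  case (Suc n)
  have "inv_power_series (Suc (Suc n)) 1 u = inv_power_series (Suc n) 1 u + (- u) ^ Suc n"
    using inv_power_series_Suc[of 1 n u] by (simp add: power_minus[of u])
  then have "(1 + u) * inv_power_series (Suc (Suc n)) 1 u
      = (1 + u) * inv_power_series (Suc n) 1 u + (1 + u) * (- u) ^ Suc n"
    by (simp only: distrib_left)
  also have "\<dots> = - u - (- u) ^ Suc (Suc n)"
    unfolding Suc.IH by (simp add: algebra_simps)
  finally show ?case .
qed

lemma inv_power_series_recurrence:
  assumes "1 \<le> m"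
  shows "(1 + u) * inv_power_series (Suc n) (Suc m) u + u * inv_power_series (Suc n) m u
    = (-1) ^ n * of_nat (n choose m) * u ^ Suc n"
proof (induction n)
  case 0
  with assms show ?case by (simp add: inv_power_series_def)
next
  case (Suc n)
  have pascal: "of_nat (Suc n choose m) = (of_nat (n choose m) + of_nat (n choose (m - 1)) :: complex)"
    using assms by (cases m) simp_all
  have "(1 + u) * inv_power_series (Suc (Suc n)) (Suc m) u + u * inv_power_series (Suc (Suc n)) m u
     = ((1 + u) * inv_power_series (Suc n) (Suc m) u + u * inv_power_series (Suc n) m u)
       + (-1) ^ Suc n * ((1 + u) * of_nat (n choose m) + u * of_nat (n choose (m - 1))) * u ^ Suc n"
    using assms by (simp add: inv_power_series_Suc algebra_simps)
  also have "\<dots> = (-1) ^ Suc n * of_nat (Suc n choose m) * u ^ Suc (Suc n)"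
    unfolding Suc.IH pascal by (simp add: algebra_simps)
  finally show ?case .
qed

definition tm1_series :: "nat \<Rightarrow> nat \<Rightarrow> lp" where
  "tm1_series N m = (\<lambda>z. \<Sum>k\<in>{m..<N}. (-1) ^ k * of_nat ((k - 1) choose (m - 1)) * tm1_pow k z)"

lemma laurent_tm1_series: "laurent (tm1_series N m)"
  unfolding tm1_series_def by (intro laurent_sum laurent_scale laurent_tm1_pow)

lemma tm1_series_0 [simp]: "tm1_series N m 0 = 0"
  by (simp add: tm1_series_def tm1_pow_def mask_def)

lemma tm1_series_eq: "z \<noteq> 0 \<Longrightarrow> tm1_series N m z = inv_power_series N m (z - 1)"
  by (simp add: tm1_series_def inv_power_series_def tm1_pow_def mask_def)


lemma tm1_series_1:
  assumes "1 \<le> N"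
  shows "vanishes_to N (\<lambda>z. z * (tm1_series N 1 z - itm1_pow 1 z))"
proof -
  obtain n where n: "N = Suc n" using assms by (cases N) auto
  have "vanishes_to N (\<lambda>z. (z - 1) ^ N * ((-1) ^ Suc N * one_lp z))"
    by (intro vanishes_toI laurent_scale laurent_one_lp)
  then show ?thesis
  proof (rule vanishes_to_cong)
    fix z :: complex
    show "(z - 1) ^ N * ((-1) ^ Suc N * one_lp z) = z * (tm1_series N 1 z - itm1_pow 1 z)"
    proof (cases "z = 0")
      case False
      have "z * tm1_series N 1 z = - (z - 1) - (- (z - 1)) ^ N"
        using inv_power_series_1[of "z - 1" n] n False by (simp add: tm1_series_eq)
      moreover have "z * itm1_pow 1 z = 1 - z"
        using False by (simp add: itm1_pow_def mask_def right_diff_distrib)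
      moreover have "(1 - z) ^ N = (-1) ^ N * (z - 1) ^ N"
        by (metis minus_diff_eq mult_minus1 power_mult_distrib)
      ultimately show ?thesis
        using False by (simp add: right_diff_distrib one_lp_def mask_def)
    qed (simp add: one_lp_def mask_def)
  qed
qed

lemma tm1_series_recurrence:
  assumes "1 \<le> m" "1 \<le> N"
  shows "vanishes_to N (\<lambda>z. z * (tm1_series N (Suc m) z - itm1_pow (Suc m) z)
    + (z - 1) * (tm1_series N m z - itm1_pow m z))"
proof -
  obtain n where n: "N = Suc n" using assms(2) by (cases N) auto
  have "vanishes_to N (\<lambda>z. (z - 1) ^ N * ((-1) ^ n * of_nat (n choose m) * one_lp z))"
    by (intro vanishes_toI laurent_scale laurent_one_lp)
  then show ?thesis
  proof (rule vanishes_to_cong)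
    fix z :: complex
    show "(z - 1) ^ N * ((-1) ^ n * of_nat (n choose m) * one_lp z)
      = z * (tm1_series N (Suc m) z - itm1_pow (Suc m) z) + (z - 1) * (tm1_series N m z - itm1_pow m z)"
    proof (cases "z = 0")
      case False
      have "z * tm1_series N (Suc m) z + (z - 1) * tm1_series N m z
          = (z - 1) ^ N * ((-1) ^ n * of_nat (n choose m) * one_lp z)"
        using inv_power_series_recurrence[OF assms(1), of "z - 1" n] n False
        by (simp add: tm1_series_eq one_lp_def mask_def mult.commute)
      moreover have "z * itm1_pow (Suc m) z + (z - 1) * itm1_pow m z = 0"
        using False by (simp add: itm1_pow_def mask_def field_simps)
      ultimately show ?thesis
        by (simp add: algebra_simps)
    qed (simp add: one_lp_def mask_def itm1_pow_def)
  qed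
qed

text \<open>Both sides satisfy t f(m+1) + (t - 1) f(m) = 0 modulo (t - 1)^N, and t is a unit.\<close>

lemma tm1_series_cong_itm1_pow:
  assumes m: "1 \<le> m" and N: "1 \<le> N"
  shows "vanishes_to N (\<lambda>z. tm1_series N m z - itm1_pow m z)"
  using m
proof (induction m rule: dec_induct)
  case base
  from tm1_series_1[OF N] show ?case
    by (rule vanishes_to_cancel_z) (intro laurent_diff laurent_tm1_series laurent_itm1_pow)
next
  case (step m)
  have "vanishes_to N (\<lambda>z. (z - 1) * (tm1_series N m z - itm1_pow m z))"
    using vanishes_to_mult_left[OF laurent_tm1_pow[of 1] step.IH]
    by (rule vanishes_to_cong) (simp add: tm1_pow_def itm1_pow_def mask_def)
  from vanishes_to_diff[OF tm1_series_recurrence[OF step.hyps(1) N] this]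
  have "vanishes_to N (\<lambda>z. z * (tm1_series N (Suc m) z - itm1_pow (Suc m) z))"
    by simp
  then show ?case
    by (rule vanishes_to_cancel_z) (intro laurent_diff laurent_tm1_series laurent_itm1_pow)
qed

section \<open>Elements of the Onsager algebra as pairs of Laurent polynomials\<close>

definition oa_of :: "lp \<Rightarrow> lp \<Rightarrow> oa_elt" where
  "oa_of p r = (p, inv_arg p, r)"

definition inv_odd :: "lp \<Rightarrow> bool" where
  "inv_odd r \<longleftrightarrow> (\<forall>z. r (inverse z) = - r z)"

lemma oa_of_add: "oa_of p r + oa_of p' r' = oa_of (\<lambda>z. p z + p' z) (\<lambda>z. r z + r' z)"
  by (simp add: oa_of_def inv_arg_def plus_fun_def)

lemma oa_of_diff: "oa_of p r - oa_of p' r' = oa_of (\<lambda>z. p z - p' z) (\<lambda>z. r z - r' z)"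
  by (simp add: oa_of_def inv_arg_def fun_diff_def)

lemma elt_scale_oa_of: "elt_scale c (oa_of p r) = oa_of (\<lambda>z. c * p z) (\<lambda>z. c * r z)"
  by (simp add: oa_of_def inv_arg_def elt_scale_def)

lemma oa_of_sum:
  "(\<Sum>j\<in>A. oa_of (p j) (r j)) = oa_of (\<lambda>z. \<Sum>j\<in>A. p j z) (\<lambda>z. \<Sum>j\<in>A. r j z)"
proof (induction A rule: infinite_finite_induct)
  case (insert x F)
  then show ?case by (simp add: oa_of_add)
qed (simp_all add: oa_of_def inv_arg_def zero_prod_def zero_fun_def)

lemma inv_odd_iff: "inv_odd r \<longleftrightarrow> inv_arg r = - r"
  by (auto simp: inv_odd_def inv_arg_def fun_eq_iff)

lemma oa_of_in_Onsager_iff: "oa_of p r \<in> Onsager \<longleftrightarrow> laurent p \<and> laurent r \<and> inv_odd r"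
  by (auto simp: oa_of_def Onsager_def inv_odd_iff)

lemma OnsagerE:
  assumes "x \<in> Onsager"
  obtains p r where "x = oa_of p r" "laurent p" "laurent r" "inv_odd r"
  using assms by (auto simp: Onsager_def oa_of_def inv_odd_iff)

lemma oa_of_in_ideal_iff:
  "oa_of p r \<in> onsager_ideal N \<longleftrightarrow> vanishes_to N p \<and> vanishes_to N r \<and> inv_odd r"
proof -
  have "oa_of p r \<in> onsager_ideal N \<longleftrightarrow> oa_of p r \<in> Onsager \<and> vanishes_to N p \<and> vanishes_to N r"
    unfolding onsager_ideal_def vanishes_to_def oa_of_def by auto
  then show ?thesis
    using oa_of_in_Onsager_iff vanishes_to_laurent by blast
qed

lemma inv_odd_zero: "inv_odd (\<lambda>z. 0)"
  by (simp add: inv_odd_def)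

lemma inv_odd_diff: "inv_odd f \<Longrightarrow> inv_odd g \<Longrightarrow> inv_odd (\<lambda>z. f z - g z)"
  by (simp add: inv_odd_def)

lemma inv_odd_scale: "inv_odd f \<Longrightarrow> inv_odd (\<lambda>z. c * f z)"
  by (simp add: inv_odd_def)

lemma inv_odd_sum: "(\<And>a. a \<in> A \<Longrightarrow> inv_odd (f a)) \<Longrightarrow> inv_odd (\<lambda>z. \<Sum>a\<in>A. f a z)"
  by (simp add: inv_odd_def sum_negf)

lemma inv_odd_commutator: "inv_odd (\<lambda>z. p z * inv_arg q z - inv_arg p z * q z)"
  by (simp add: inv_odd_def inv_arg_def)

lemma inv_odd_inv_arg_diff: "inv_odd (\<lambda>z. inv_arg p z - p z)"
  by (simp add: inv_odd_def inv_arg_def)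

lemma loop_bracket_oa_of:
  assumes "inv_odd r" "inv_odd r'"
  shows "loop_bracket (oa_of p r) (oa_of p' r')
    = oa_of (\<lambda>z. 2 * (r z * p' z - p z * r' z)) (\<lambda>z. p z * inv_arg p' z - inv_arg p z * p' z)"
  using assms
  by (simp add: loop_bracket_def oa_of_def fun_eq_iff inv_arg_def inv_odd_def algebra_simps)

lemma onsager_idealE:
  assumes "x \<in> onsager_ideal N"
  obtains p r where "x = oa_of p r" "vanishes_to N p" "vanishes_to N r" "inv_odd r"
proof -
  from assms have "x \<in> Onsager" by (auto simp: onsager_ideal_def)
  then obtain p r where "x = oa_of p r" by (rule OnsagerE)
  with assms that show thesis by (simp add: oa_of_in_ideal_iff)
qed

lemma oa_of_zero: "oa_of (\<lambda>z. 0) (\<lambda>z. 0) = 0"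
  by (simp add: oa_of_def inv_arg_def zero_prod_def zero_fun_def)

lemma zero_in_onsager_ideal: "0 \<in> onsager_ideal N"
  using oa_of_in_ideal_iff[of "\<lambda>z. 0" "\<lambda>z. 0" N]
  by (simp add: oa_of_zero vanishes_to_zero inv_odd_zero)

lemma onsager_ideal_add:
  "x \<in> onsager_ideal N \<Longrightarrow> y \<in> onsager_ideal N \<Longrightarrow> x + y \<in> onsager_ideal N"
  by (elim onsager_idealE)
    (simp add: oa_of_add oa_of_in_ideal_iff vanishes_to_add inv_odd_def)

lemma onsager_ideal_diff:
  "x \<in> onsager_ideal N \<Longrightarrow> y \<in> onsager_ideal N \<Longrightarrow> x - y \<in> onsager_ideal N"
  by (elim onsager_idealE)
    (simp add: oa_of_diff oa_of_in_ideal_iff vanishes_to_diff inv_odd_diff)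

lemma onsager_ideal_scale: "x \<in> onsager_ideal N \<Longrightarrow> elt_scale c x \<in> onsager_ideal N"
  by (elim onsager_idealE)
    (simp add: elt_scale_oa_of oa_of_in_ideal_iff vanishes_to_scale inv_odd_scale)

lemma onsager_ideal_sum:
  "(\<And>a. a \<in> A \<Longrightarrow> f a \<in> onsager_ideal N) \<Longrightarrow> (\<Sum>a\<in>A. f a) \<in> onsager_ideal N"
  by (induction A rule: infinite_finite_induct) (simp_all add: zero_in_onsager_ideal onsager_ideal_add)

lemma onsager_ideal_bracket:
  assumes "x \<in> Onsager" "y \<in> onsager_ideal N"
  shows "loop_bracket x y \<in> onsager_ideal N"
proof -
  obtain p r where x: "x = oa_of p r" "laurent p" "laurent r" "inv_odd r"
    using assms(1) by (rule OnsagerE)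
  obtain p' r' where y: "y = oa_of p' r'" "vanishes_to N p'" "vanishes_to N r'" "inv_odd r'"
    using assms(2) by (rule onsager_idealE)
  have "vanishes_to N (\<lambda>z. 2 * (r z * p' z - p z * r' z))"
    using x y by (intro vanishes_to_scale vanishes_to_diff vanishes_to_mult_left)
  moreover have "vanishes_to N (\<lambda>z. p z * inv_arg p' z - inv_arg p z * p' z)"
    using x y by (intro vanishes_to_diff vanishes_to_mult_left vanishes_to_inv_arg laurent_inv_arg)
  ultimately show ?thesis
    using x y by (simp add: loop_bracket_oa_of oa_of_in_ideal_iff inv_odd_commutator)
qed

lemma loop_bracket_diff_right: "loop_bracket x (y - y') = loop_bracket x y - loop_bracket x y'"
  by (cases x; cases y; cases y') (simp add: loop_bracket_def algebra_simps)

lemma loop_bracket_add_right: "loop_bracket x (y + y') = loop_bracket x y + loop_bracket x y'"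
  by (cases x; cases y; cases y') (simp add: loop_bracket_def algebra_simps)

lemma loop_bracket_zero_right: "loop_bracket x 0 = 0"
  by (cases x) (simp add: loop_bracket_def zero_prod_def)

lemma loop_bracket_sum_right: "loop_bracket x (\<Sum>a\<in>A. f a) = (\<Sum>a\<in>A. loop_bracket x (f a))"
  by (induction A rule: infinite_finite_induct)
    (simp_all add: loop_bracket_zero_right loop_bracket_add_right)

lemma elt_scale_diff: "elt_scale c (x - y) = elt_scale c x - elt_scale c y"
  by (cases x; cases y) (simp add: elt_scale_def fun_eq_iff algebra_simps)

lemma elt_scale_add: "elt_scale c (x + y) = elt_scale c x + elt_scale c y"
  by (cases x; cases y) (simp add: elt_scale_def fun_eq_iff algebra_simps)

lemma elt_scale_zero: "elt_scale c 0 = 0"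
  by (simp add: elt_scale_def zero_prod_def zero_fun_def)

lemma elt_scale_0 [simp]: "elt_scale 0 x = 0"
  by (cases x) (simp add: elt_scale_def zero_prod_def zero_fun_def)

lemma elt_scale_sum: "elt_scale c (\<Sum>a\<in>A. f a) = (\<Sum>a\<in>A. elt_scale c (f a))"
  by (induction A rule: infinite_finite_induct) (simp_all add: elt_scale_zero elt_scale_add)


lemma inv_odd_vanishes_to_Suc:
  assumes "inv_odd r" "vanishes_to n r" "even n"
  shows "vanishes_to (Suc n) r"
proof -
  obtain \<alpha> where \<alpha>: "lead_term n \<alpha> r"
    using vanishes_to_lead_term[OF assms(2)] ..
  have "lead_term n \<alpha> (\<lambda>z. - r z)"
    using lead_term_inv_arg[OF \<alpha>] assms(1,3) by (simp add: inv_odd_iff fun_Compl_def)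
  from lead_term_unique[OF \<alpha> lead_term_cong[OF lead_term_scale[OF this, where c="-1"]]]
  have "\<alpha> = 0" by simp
  with \<alpha> show ?thesis
    by (simp add: lead_term_0_iff)
qed

lemma Xel_eq: "Xel k = oa_of (\<lambda>z. 2 * tm1_pow k z) (\<lambda>z. 0)"
  by (auto simp: Xel_def oa_of_def inv_arg_def tm1_pow_def mask_def zero_fun_def)

lemma Yel_eq: "Yel k = oa_of (\<lambda>z. 0) (\<lambda>z. (-1) ^ k * (tm1_pow k z - itm1_pow k z))"
  by (auto simp: Yel_def oa_of_def inv_arg_def tm1_pow_def itm1_pow_def mask_def zero_fun_def)

definition zero_e :: "nat \<Rightarrow> nat \<Rightarrow> lp" where
  "zero_e l j = (if j = 1 then (\<lambda>z. 2 * one_lp z) else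
     (\<lambda>z. \<Sum>k\<in>{2*j-2..2*l-1}. (-1) ^ k * of_nat ((k - 1) choose (2*j-4)) * (2 * tm1_pow k z)))"

definition pm_e :: "nat \<Rightarrow> nat \<Rightarrow> lp" where
  "pm_e l j = (\<lambda>z. 2 * tm1_pow (2*j-1) z -
     (\<Sum>k\<in>{2*j-1..2*l-1}. (-1) ^ k * of_nat ((k - 1) choose (2*j-2)) * (2 * tm1_pow k z)))"

definition pm_h :: "nat \<Rightarrow> lp" where
  "pm_h j = (\<lambda>z. -2 * (tm1_pow (2*j-1) z - itm1_pow (2*j-1) z))"

lemma zero_vec_eq: "1 \<le> j \<Longrightarrow> zero_vec l j = oa_of (zero_e l j) (\<lambda>z. 0)"
  by (cases "j = 1")
    (simp_all add: zero_vec_def zero_e_def Xel_eq tm1_pow_0 elt_scale_oa_of oa_of_sum)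

lemma pm_vec_eq: "1 \<le> j \<Longrightarrow> pm_vec l s j = oa_of (\<lambda>z. s * pm_e l j z) (pm_h j)"
  unfolding pm_vec_def Xel_eq Yel_eq elt_scale_oa_of oa_of_sum oa_of_diff oa_of_add
  by (simp add: pm_e_def pm_h_def odd_pos)

lemma laurent_zero_e: "laurent (zero_e l j)"
  unfolding zero_e_def by (auto intro!: laurent_scale laurent_sum laurent_tm1_pow laurent_one_lp)

lemma laurent_pm_e: "laurent (pm_e l j)"
  unfolding pm_e_def by (intro laurent_diff laurent_scale laurent_sum laurent_tm1_pow)

lemma laurent_pm_h: "laurent (pm_h j)"
  unfolding pm_h_def by (intro laurent_diff laurent_scale laurent_itm1_pow laurent_tm1_pow)

lemma inv_odd_pm_h: "inv_odd (pm_h j)"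
  by (simp add: inv_odd_def pm_h_def tm1_pow_inverse itm1_pow_inverse)

lemma tm1_series_atLeastAtMost:
  "1 \<le> N \<Longrightarrow> tm1_series N m z = (\<Sum>k\<in>{m..N-1}. (-1) ^ k * of_nat ((k - 1) choose (m - 1)) * tm1_pow k z)"
  by (simp add: tm1_series_def atLeastLessThanSuc_atLeastAtMost[symmetric])

lemma pm_e_eq: "1 \<le> l \<Longrightarrow> pm_e l j z = 2 * tm1_pow (2*j-1) z - 2 * tm1_series (2*l) (2*j-1) z"
proof -
  assume "1 \<le> l"
  moreover have "2 * j - 1 - 1 = 2 * j - 2" by simp
  ultimately show ?thesis
    by (simp add: pm_e_def tm1_series_atLeastAtMost sum_distrib_left mult_ac)
qed

lemma zero_e_eq:
  assumes "2 \<le> j" "j \<le> l"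
  shows "zero_e l j z = 2 * (tm1_series (2*l) (2*j-3) z + tm1_pow (2*j-3) z)"
proof -
  obtain i where i: "j = Suc (Suc i)" using assms(1) by (metis add_2_eq_Suc le_Suc_ex)
  let ?f = "\<lambda>k. (-1) ^ k * of_nat ((k - 1) choose (2*i)) * tm1_pow k z"
  have "tm1_series (2*l) (2*i+1) z = ?f (2*i+1) + sum ?f {2*i+2..2*l-1}"
    using assms i by (simp add: tm1_series_atLeastAtMost sum.atLeast_Suc_atMost)
  moreover have "?f (2*i+1) = - tm1_pow (2*i+1) z" by simp
  moreover have "zero_e l j z = 2 * sum ?f {2*i+2..2*l-1}"
    using i by (simp add: zero_e_def sum_distrib_left mult_ac)
  ultimately show ?thesis
    using i by simp
qed

lemma vanishes_to_pm_e_add_pm_h: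
  assumes "1 \<le> l" "1 \<le> j"
  shows "vanishes_to (2*l) (\<lambda>z. pm_e l j z + pm_h j z)"
  using vanishes_to_scale[OF tm1_series_cong_itm1_pow[of "2*j-1" "2*l"], where c="-2"] assms
  by (auto intro: vanishes_to_cong simp: pm_e_eq pm_h_def algebra_simps)

lemma vanishes_to_pm_e_inv_arg:
  assumes "1 \<le> l" "1 \<le> j"
  shows "vanishes_to (2*l) (\<lambda>z. inv_arg (pm_e l j) z - pm_e l j z - 2 * pm_h j z)"
proof -
  note W = vanishes_to_pm_e_add_pm_h[OF assms]
  from vanishes_to_diff[OF vanishes_to_inv_arg[OF W] W] show ?thesis
    by (rule vanishes_to_cong) (use inv_odd_pm_h[of j] in \<open>simp add: inv_arg_def inv_odd_def\<close>)
qed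

lemma vanishes_to_zero_e_inv_arg:
  assumes "1 \<le> l" "1 \<le> j" "j \<le> l"
  shows "vanishes_to (2*l) (\<lambda>z. inv_arg (zero_e l j) z - zero_e l j z)"
proof (cases "j = 1")
  case True
  then show ?thesis
    using inv_arg_one_lp by (simp add: zero_e_def inv_arg_def fun_eq_iff vanishes_to_zero)
next
  case False
  let ?m = "2*j-3"
  have "vanishes_to (2*l) (\<lambda>z. zero_e l j z - 2 * (itm1_pow ?m z + tm1_pow ?m z))"
    using vanishes_to_scale[OF tm1_series_cong_itm1_pow[of ?m "2*l"], where c=2] assms False
    by (auto intro: vanishes_to_cong simp: zero_e_eq algebra_simps)
  note Z = this vanishes_to_inv_arg[OF this]
  from vanishes_to_diff[OF Z(2) Z(1)] show ?thesis
    by (rule vanishes_to_cong) (simp add: inv_arg_def tm1_pow_inverse itm1_pow_inverse)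
qed

lemma lead_term_tm1_pow_sum:
  assumes "m \<le> M"
  shows "lead_term m (w m) (\<lambda>z. \<Sum>k\<in>{m..M}. w k * tm1_pow k z)"
proof -
  have "vanishes_to (Suc m) (\<lambda>z. \<Sum>k\<in>{Suc m..M}. w k * tm1_pow k z)"
    by (rule vanishes_to_sum_higher) (simp add: vanishes_to_tm1_pow)
  then show ?thesis
    unfolding lead_term_def using assms by (simp add: sum.atLeast_Suc_atMost)
qed

lemma lead_term_tm1_series:
  assumes "1 \<le> m" "m < N"
  shows "lead_term m ((-1) ^ m) (tm1_series N m)"
proof -
  have "lead_term m ((-1) ^ m * of_nat ((m - 1) choose (m - 1)))
      (\<lambda>z. \<Sum>k\<in>{m..N-1}. (-1) ^ k * of_nat ((k - 1) choose (m - 1)) * tm1_pow k z)"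
    using assms by (intro lead_term_tm1_pow_sum) simp
  then show ?thesis
    by (rule lead_term_cong) (use assms in \<open>simp_all add: tm1_series_atLeastAtMost\<close>)
qed

lemma lead_term_pm_e:
  assumes "1 \<le> j" "j \<le> l"
  shows "lead_term (2*j-1) 4 (pm_e l j)"
proof -
  have "lead_term (2*j-1) (2 * 1 - 2 * (-1) ^ (2*j-1))
      (\<lambda>z. 2 * tm1_pow (2*j-1) z - 2 * tm1_series (2*l) (2*j-1) z)"
    using assms by (intro lead_term_diff lead_term_scale lead_term_tm1_pow lead_term_tm1_series) auto
  then show ?thesis
    by (rule lead_term_cong) (use assms in \<open>simp_all add: pm_e_eq odd_pos\<close>)
qed

lemma lead_term_pm_h: "1 \<le> j \<Longrightarrow> lead_term (2*j-1) (-4) (pm_h j)"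
  using lead_term_scale[OF lead_term_diff[OF lead_term_tm1_pow lead_term_itm1_pow[of "2*j-1"]],
      where c="-2"]
  by (rule lead_term_cong) (simp_all add: pm_h_def odd_pos)

lemma lead_term_zero_e:
  assumes "1 \<le> j" "j \<le> l"
  shows "\<exists>\<alpha>. \<alpha> \<noteq> 0 \<and> lead_term (2*j-2) \<alpha> (zero_e l j)"
proof (cases "j = 1")
  case True
  then have "lead_term (2*j-2) (2 * 1) (zero_e l j)"
    using lead_term_scale[OF lead_term_tm1_pow[of 0]]
    by (auto intro: lead_term_cong simp: zero_e_def tm1_pow_0)
  then show ?thesis by (intro exI[of _ 2]) simp
next
  case False
  define i where "i = j - 2"
  with False assms(1) have i: "j = Suc (Suc i)" by simp
  let ?w = "\<lambda>k. (-1) ^ k * of_nat ((k - 1) choose (2*i)) * (2::complex)"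
  have "zero_e l j = (\<lambda>z. \<Sum>k\<in>{2*i+2..2*l-1}. ?w k * tm1_pow k z)"
    unfolding i zero_e_def by (simp add: mult.assoc)
  moreover have "lead_term (2*i+2) (?w (2*i+2)) (\<lambda>z. \<Sum>k\<in>{2*i+2..2*l-1}. ?w k * tm1_pow k z)"
    using assms i by (intro lead_term_tm1_pow_sum[of _ _ ?w]) simp
  moreover have "?w (2*i+2) = of_nat (2*i+1) * 2" and "2*i+2 = 2*j-2"
    using i by simp_all
  ultimately show ?thesis
    by (intro exI[of _ "of_nat (2*i+1) * 2"]) (simp del: of_nat_Suc)
qed

section \<open>Triangularity of the coefficient families\<close>

definition e_family :: "nat \<Rightarrow> nat \<Rightarrow> lp" where
  "e_family l k = (if even k then zero_e l (k div 2 + 1) else pm_e l (k div 2 + 1))"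

text \<open>The even orders carry the filler (t - 1)^k, which keeps the family triangular;
  antisymmetric functions never need it.\<close>

definition h_family :: "nat \<Rightarrow> lp" where
  "h_family k = (if even k then tm1_pow k else pm_h (k div 2 + 1))"

lemma laurent_e_family: "laurent (e_family l k)"
  by (simp add: e_family_def laurent_zero_e laurent_pm_e)

lemma inv_odd_h_family: "odd k \<Longrightarrow> inv_odd (h_family k)"
  by (simp add: h_family_def inv_odd_pm_h)

lemma laurent_h_family: "laurent (h_family k)"
  by (simp add: h_family_def laurent_pm_h laurent_tm1_pow)

lemma lead_term_e_family:
  assumes "k < 2*l"
  shows "\<exists>\<alpha>. \<alpha> \<noteq> 0 \<and> lead_term k \<alpha> (e_family l k)"
proof (cases "even k")
  case True
  with lead_term_zero_e[of "k div 2 + 1" l] assms show ?thesis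
    by (simp add: e_family_def)
next
  case False
  with lead_term_pm_e[of "k div 2 + 1" l] assms show ?thesis
    by (intro exI[of _ 4]) (simp add: e_family_def)
qed

lemma lead_term_h_family: "\<exists>\<alpha>. \<alpha> \<noteq> 0 \<and> lead_term k \<alpha> (h_family k)"
proof (cases "even k")
  case True
  with lead_term_tm1_pow[of k] show ?thesis
    by (intro exI[of _ 1]) (simp add: h_family_def)
next
  case False
  with lead_term_pm_h[of "k div 2 + 1"] show ?thesis
    by (intro exI[of _ "-4"]) (simp add: h_family_def)
qed

lemma sum_lessThan_pairs: "(\<Sum>j\<in>{1..l}. F (2*j-2) + F (2*j-1)) = (\<Sum>k<2*l. F k)"
  for l :: nat
  by (induction l) (simp_all add: add.assoc)

lemma pair_index:
  assumes "1 \<le> j"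
  shows "Suc ((2*j-2) div 2) = j" "Suc ((2*j - Suc 0) div 2) = j" "even (2*j-2)" "odd (2*j - Suc 0)"
  using assms by auto

lemma sum_e_family:
  "(\<Sum>j\<in>{1..l}. a j * zero_e l j z + b j * pm_e l j z)
   = (\<Sum>k<2*l. (if even k then a (k div 2 + 1) else b (k div 2 + 1)) * e_family l k z)"
  unfolding sum_lessThan_pairs[symmetric]
  by (rule sum.cong) (auto simp: e_family_def pair_index)

lemma sum_h_family:
  "(\<Sum>j\<in>{1..l}. g j * pm_h j z) = (\<Sum>k<2*l. (if even k then 0 else g (k div 2 + 1)) * h_family k z)"
  unfolding sum_lessThan_pairs[symmetric]
  by (rule sum.cong) (auto simp: h_family_def pair_index)

lemma e_coeffs_independent:
  assumes "vanishes_to (2*l) (\<lambda>z. \<Sum>j\<in>{1..l}. a j * zero_e l j z + b j * pm_e l j z)"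
    and "j \<in> {1..l}"
  shows "a j = 0 \<and> b j = 0"
proof -
  let ?c = "\<lambda>k. if even k then a (k div 2 + 1) else b (k div 2 + 1)"
  have "\<forall>k<2*l. ?c k = 0"
    using assms(1) unfolding sum_e_family
    by (rule triangular_independent[rotated]) (simp add: lead_term_e_family)
  moreover have "2*j-2 < 2*l" "2*j-1 < 2*l"
    using assms(2) by auto
  ultimately have "?c (2*j-2) = 0" "?c (2*j-1) = 0"
    by blast+
  then show ?thesis
    using assms(2) by (simp_all add: pair_index)
qed

lemma h_coeffs_independent:
  assumes "vanishes_to (2*l) (\<lambda>z. \<Sum>j\<in>{1..l}. g j * pm_h j z)" and "j \<in> {1..l}"
  shows "g j = 0"
proof -
  let ?c = "\<lambda>k. if even k then 0 else g (k div 2 + 1)"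
  have "\<forall>k<2*l. ?c k = 0"
    using assms(1) unfolding sum_h_family
    by (rule triangular_independent[rotated]) (simp add: lead_term_h_family)
  moreover have "2*j-1 < 2*l"
    using assms(2) by auto
  ultimately have "?c (2*j-1) = 0"
    by blast
  then show ?thesis
    using assms(2) by (simp add: pair_index)
qed

lemma e_coeffs_span:
  assumes "laurent p"
  shows "\<exists>a b. vanishes_to (2*l) (\<lambda>z. p z - (\<Sum>j\<in>{1..l}. a j * zero_e l j z + b j * pm_e l j z))"
proof -
  have "\<exists>c. (\<forall>k. k \<notin> UNIV \<longrightarrow> c k = 0) \<and>
      vanishes_to (2*l) (\<lambda>z. p z - (\<Sum>k<2*l. c k * e_family l k z))"
    by (rule triangular_span[where K=UNIV and Q=laurent, OF lead_term_e_family _ _ _ assms])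
      (simp_all add: laurent_diff laurent_scale laurent_e_family)
  then obtain c where c: "vanishes_to (2*l) (\<lambda>z. p z - (\<Sum>k<2*l. c k * e_family l k z))"
    by blast
  have "(\<Sum>k<2*l. c k * e_family l k z)
      = (\<Sum>j\<in>{1..l}. c (2*j-2) * zero_e l j z + c (2*j-1) * pm_e l j z)" for z
    unfolding sum_e_family by (rule sum.cong) auto
  with c show ?thesis by auto
qed

lemma h_coeffs_span:
  assumes "laurent r" "inv_odd r"
  shows "\<exists>g. vanishes_to (2*l) (\<lambda>z. r z - (\<Sum>j\<in>{1..l}. g j * pm_h j z))"
proof -
  have "\<exists>c. (\<forall>k. k \<notin> {k. odd k} \<longrightarrow> c k = 0) \<and>
      vanishes_to (2*l) (\<lambda>z. r z - (\<Sum>k<2*l. c k * h_family k z))"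
  proof (rule triangular_span[where Q="\<lambda>G. laurent G \<and> inv_odd G", OF lead_term_h_family])
    fix G n
    assume "laurent G \<and> inv_odd G" "vanishes_to n G" "n \<notin> {k. odd k}"
    then show "vanishes_to (Suc n) G"
      using inv_odd_vanishes_to_Suc by auto
  next
    fix G and c :: complex and k :: nat
    assume "laurent G \<and> inv_odd G" "k \<in> {k. odd k}"
    then show "laurent (\<lambda>z. G z - c * h_family k z) \<and> inv_odd (\<lambda>z. G z - c * h_family k z)"
      by (simp add: laurent_diff laurent_scale laurent_h_family inv_odd_diff inv_odd_scale
          inv_odd_h_family)
  qed (use assms in auto)
  then obtain c where c0: "\<forall>k. even k \<longrightarrow> c k = 0"
    and c: "vanishes_to (2*l) (\<lambda>z. r z - (\<Sum>k<2*l. c k * h_family k z))"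
    by auto
  have "(\<Sum>k<2*l. c k * h_family k z) = (\<Sum>j\<in>{1..l}. c (2*j-1) * pm_h j z)" for z
    unfolding sum_h_family using c0 by (intro sum.cong) auto
  with c show ?thesis by auto
qed

lemma oa_of_cong: "(\<And>z. p z = p' z) \<Longrightarrow> (\<And>z. r z = r' z) \<Longrightarrow> oa_of p r = oa_of p' r'"
  by (metis ext)

lemma loop_bracket_X0:
  assumes "laurent p" "laurent r" "inv_odd r"
  shows "loop_bracket (Xel 0) (oa_of p r) = oa_of (\<lambda>z. -4 * r z) (\<lambda>z. 2 * (inv_arg p z - p z))"
proof -
  have one: "inv_arg (\<lambda>z. 2 * one_lp z) = (\<lambda>z. 2 * one_lp z)"
    using inv_arg_one_lp by (simp add: inv_arg_def fun_eq_iff)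
  show ?thesis
    unfolding Xel_eq tm1_pow_0 loop_bracket_oa_of[OF inv_odd_zero assms(3)]
    by (rule oa_of_cong)
      (simp_all add: one right_diff_distrib mult.assoc one_lp_mult assms laurent_inv_arg)
qed

lemma zero_vec_eigen:
  assumes "1 \<le> j" "j \<le> l"
  shows "zero_vec l j \<in> Onsager \<and> loop_bracket (Xel 0) (zero_vec l j) \<in> onsager_ideal (2*l)"
proof
  show "zero_vec l j \<in> Onsager"
    using assms by (simp add: zero_vec_eq oa_of_in_Onsager_iff laurent_zero_e laurent_zero inv_odd_zero)
  have "vanishes_to (2*l) (\<lambda>z. 2 * (inv_arg (zero_e l j) z - zero_e l j z))"
    using assms by (intro vanishes_to_scale vanishes_to_zero_e_inv_arg) auto
  then show "loop_bracket (Xel 0) (zero_vec l j) \<in> onsager_ideal (2*l)"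
    using assms
    by (simp only: zero_vec_eq loop_bracket_X0 laurent_zero_e laurent_zero inv_odd_zero
        oa_of_in_ideal_iff inv_odd_scale inv_odd_inv_arg_diff mult_zero_right vanishes_to_zero)
qed

lemma pm_vec_eigen:
  assumes "1 \<le> j" "j \<le> l" "s \<in> {1, -1}"
  shows "pm_vec l s j \<in> Onsager \<and>
    loop_bracket (Xel 0) (pm_vec l s j) - elt_scale (4 * s) (pm_vec l s j) \<in> onsager_ideal (2*l)"
proof
  have s: "s * s = 1" using assms(3) by auto
  have W: "laurent (\<lambda>z. s * pm_e l j z)" by (intro laurent_scale laurent_pm_e)
  then show "pm_vec l s j \<in> Onsager"
    using assms by (simp add: pm_vec_eq oa_of_in_Onsager_iff laurent_pm_h inv_odd_pm_h)
  have "loop_bracket (Xel 0) (pm_vec l s j) - elt_scale (4 * s) (pm_vec l s j)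
    = oa_of (\<lambda>z. -4 * (pm_e l j z + pm_h j z))
        (\<lambda>z. 2 * s * (inv_arg (pm_e l j) z - pm_e l j z - 2 * pm_h j z))"
    unfolding pm_vec_eq[OF assms(1)] loop_bracket_X0[OF W laurent_pm_h inv_odd_pm_h]
      elt_scale_oa_of oa_of_diff
    by (rule oa_of_cong) (simp_all add: inv_arg_def algebra_simps s)
  moreover have "vanishes_to (2*l) (\<lambda>z. -4 * (pm_e l j z + pm_h j z))"
    using assms by (intro vanishes_to_scale vanishes_to_pm_e_add_pm_h) auto
  moreover have "vanishes_to (2*l) (\<lambda>z. 2 * s * (inv_arg (pm_e l j) z - pm_e l j z - 2 * pm_h j z))"
    using assms by (intro vanishes_to_scale vanishes_to_pm_e_inv_arg) auto
  moreover have "inv_odd (\<lambda>z. 2 * s * (inv_arg (pm_e l j) z - pm_e l j z - 2 * pm_h j z))"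
    using inv_odd_pm_h[of j]
    by (intro inv_odd_scale inv_odd_diff inv_odd_inv_arg_diff) (simp add: inv_odd_def)
  ultimately show "loop_bracket (Xel 0) (pm_vec l s j) - elt_scale (4 * s) (pm_vec l s j)
      \<in> onsager_ideal (2*l)"
    by (simp add: oa_of_in_ideal_iff)
qed

lemma zero_vecs_commute:
  assumes "1 \<le> i" "i \<le> l" "1 \<le> j" "j \<le> l"
  shows "loop_bracket (zero_vec l i) (zero_vec l j) \<in> onsager_ideal (2*l)"
proof -
  let ?Z = "zero_e l"
  have "loop_bracket (zero_vec l i) (zero_vec l j)
    = oa_of (\<lambda>z. 0) (\<lambda>z. ?Z i z * (inv_arg (?Z j) z - ?Z j z) - (inv_arg (?Z i) z - ?Z i z) * ?Z j z)"
    unfolding zero_vec_eq[OF assms(1)] zero_vec_eq[OF assms(3)] loop_bracket_oa_of[OF inv_odd_zero inv_odd_zero]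
    by (rule oa_of_cong) (simp_all add: algebra_simps)
  moreover have "vanishes_to (2*l)
      (\<lambda>z. ?Z i z * (inv_arg (?Z j) z - ?Z j z) - (inv_arg (?Z i) z - ?Z i z) * ?Z j z)"
    using assms
    by (intro vanishes_to_diff vanishes_to_mult_left laurent_zero_e vanishes_to_zero_e_inv_arg
        vanishes_to_cong[OF vanishes_to_mult_left[OF laurent_zero_e vanishes_to_zero_e_inv_arg]])
      (auto simp: mult.commute)
  moreover have "inv_odd (\<lambda>z. ?Z i z * (inv_arg (?Z j) z - ?Z j z) - (inv_arg (?Z i) z - ?Z i z) * ?Z j z)"
    using inv_odd_commutator[of "?Z i" "?Z j"] by (simp add: algebra_simps)
  ultimately show ?thesis
    by (simp add: oa_of_in_ideal_iff vanishes_to_zero)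
qed

section \<open>The eigenspace decomposition\<close>

definition eigen_comb :: "nat \<Rightarrow> (nat \<Rightarrow> complex) \<Rightarrow> (nat \<Rightarrow> complex) \<Rightarrow> (nat \<Rightarrow> complex) \<Rightarrow> oa_elt"
  where "eigen_comb l a b c = (\<Sum>j=1..l. elt_scale (a j) (zero_vec l j) + elt_scale (b j) (pm_vec l 1 j)
    + elt_scale (c j) (pm_vec l (-1) j))"

lemma eigen_comb_eq:
  "eigen_comb l a b c = oa_of (\<lambda>z. \<Sum>j\<in>{1..l}. a j * zero_e l j z + (b j - c j) * pm_e l j z)
    (\<lambda>z. \<Sum>j\<in>{1..l}. (b j + c j) * pm_h j z)"
proof -
  have "eigen_comb l a b c = (\<Sum>j=1..l. oa_of (\<lambda>z. a j * zero_e l j z + (b j - c j) * pm_e l j z)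
      (\<lambda>z. (b j + c j) * pm_h j z))"
    unfolding eigen_comb_def
  proof (rule sum.cong)
    fix j
    assume "j \<in> {1..l}"
    then have j: "1 \<le> j" by simp
    show "elt_scale (a j) (zero_vec l j) + elt_scale (b j) (pm_vec l 1 j) + elt_scale (c j) (pm_vec l (-1) j)
      = oa_of (\<lambda>z. a j * zero_e l j z + (b j - c j) * pm_e l j z) (\<lambda>z. (b j + c j) * pm_h j z)"
      unfolding zero_vec_eq[OF j] pm_vec_eq[OF j] elt_scale_oa_of oa_of_add
      by (rule oa_of_cong) (simp_all add: algebra_simps)
  qed simp
  then show ?thesis by (simp only: oa_of_sum)
qed

lemma eigen_comb_independent:
  assumes "eigen_comb l a b c \<in> onsager_ideal (2*l)" "j \<in> {1..l}"
  shows "a j = 0 \<and> b j = 0 \<and> c j = 0"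
proof -
  from assms(1) have
    e: "vanishes_to (2*l) (\<lambda>z. \<Sum>j\<in>{1..l}. a j * zero_e l j z + (b j - c j) * pm_e l j z)" and
    h: "vanishes_to (2*l) (\<lambda>z. \<Sum>j\<in>{1..l}. (b j + c j) * pm_h j z)"
    by (simp_all add: eigen_comb_eq oa_of_in_ideal_iff)
  have "a j = 0 \<and> b j - c j = 0" "b j + c j = 0"
    using e_coeffs_independent[OF e assms(2)] h_coeffs_independent[OF h assms(2)] by simp_all
  then show ?thesis by simp
qed

lemma eigen_comb_span:
  assumes "x \<in> Onsager"
  shows "\<exists>a b c. x - eigen_comb l a b c \<in> onsager_ideal (2*l)"
proof -
  obtain p r where x: "x = oa_of p r" "laurent p" "laurent r" "inv_odd r"
    using assms by (rule OnsagerE)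
  obtain a d where p: "vanishes_to (2*l) (\<lambda>z. p z - (\<Sum>j\<in>{1..l}. a j * zero_e l j z + d j * pm_e l j z))"
    using e_coeffs_span[OF x(2)] by blast
  obtain g where r: "vanishes_to (2*l) (\<lambda>z. r z - (\<Sum>j\<in>{1..l}. g j * pm_h j z))"
    using h_coeffs_span[OF x(3,4)] by blast
  define b c where "b = (\<lambda>j. (g j + d j) / 2)" and "c = (\<lambda>j. (g j - d j) / 2)"
  then have "b j - c j = d j" "b j + c j = g j" for j
    by (simp_all add: field_simps)
  moreover have "inv_odd (\<lambda>z. r z - (\<Sum>j\<in>{1..l}. g j * pm_h j z))"
    by (intro inv_odd_diff x(4) inv_odd_sum inv_odd_scale inv_odd_pm_h)
  ultimately have "x - eigen_comb l a b c \<in> onsager_ideal (2*l)"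
    using p r by (simp add: x(1) eigen_comb_eq oa_of_diff oa_of_in_ideal_iff)
  then show ?thesis by blast
qed

text \<open>Each summand of an eigen_comb is an eigenvector, so ad X_0 - \<mu> acts on the
  coefficients diagonally.\<close>

lemma eigen_comb_bracket_X0:
  "loop_bracket (Xel 0) (eigen_comb l a b c) - elt_scale \<mu> (eigen_comb l a b c)
    - eigen_comb l (\<lambda>j. - \<mu> * a j) (\<lambda>j. (4 - \<mu>) * b j) (\<lambda>j. (- (4 + \<mu>)) * c j)
    \<in> onsager_ideal (2*l)"
proof -
  have diag: "loop_bracket x (elt_scale (a j) u + elt_scale (b j) v + elt_scale (c j) w)
      - elt_scale \<mu> (elt_scale (a j) u + elt_scale (b j) v + elt_scale (c j) w)
      - (elt_scale (- \<mu> * a j) u + elt_scale ((4 - \<mu>) * b j) v + elt_scale ((- (4 + \<mu>)) * c j) w)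
    = elt_scale (a j) (loop_bracket x u) + elt_scale (b j) (loop_bracket x v - elt_scale 4 v)
      + elt_scale (c j) (loop_bracket x w - elt_scale (-4) w)" for x u v w j
    by (cases x; cases u; cases v; cases w)
      (simp add: loop_bracket_def elt_scale_def fun_eq_iff algebra_simps)
  have eigen: "loop_bracket (Xel 0) (zero_vec l j) \<in> onsager_ideal (2*l)"
    "loop_bracket (Xel 0) (pm_vec l 1 j) - elt_scale 4 (pm_vec l 1 j) \<in> onsager_ideal (2*l)"
    "loop_bracket (Xel 0) (pm_vec l (-1) j) - elt_scale (-4) (pm_vec l (-1) j) \<in> onsager_ideal (2*l)"
    if "j \<in> {1..l}" for j
    using that zero_vec_eigen[of j l] pm_vec_eigen[of j l 1] pm_vec_eigen[of j l "-1"] by simp_all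
  show ?thesis
    unfolding eigen_comb_def loop_bracket_sum_right elt_scale_sum sum_subtractf[symmetric] diag
    by (intro onsager_ideal_sum onsager_ideal_add onsager_ideal_scale eigen) simp_all
qed

lemma Xel_0_in_Onsager: "Xel 0 \<in> Onsager"
  by (simp add: Xel_eq oa_of_in_Onsager_iff laurent_scale laurent_tm1_pow laurent_zero inv_odd_zero)

lemma eigen_comb_coeffs:
  assumes "x \<in> Onsager" "loop_bracket (Xel 0) x - elt_scale \<mu> x \<in> onsager_ideal (2*l)"
  obtains a b c where "x - eigen_comb l a b c \<in> onsager_ideal (2*l)"
    "\<And>j. j \<in> {1..l} \<Longrightarrow> \<mu> * a j = 0 \<and> (4 - \<mu>) * b j = 0 \<and> (4 + \<mu>) * c j = 0"
proof -
  obtain a b c where D: "x - eigen_comb l a b c \<in> onsager_ideal (2*l)"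
    using eigen_comb_span[OF assms(1)] by blast
  let ?y = "eigen_comb l a b c"
  have "loop_bracket (Xel 0) ?y - elt_scale \<mu> ?y
      = (loop_bracket (Xel 0) x - elt_scale \<mu> x)
        - (loop_bracket (Xel 0) (x - ?y) - elt_scale \<mu> (x - ?y))"
    by (simp add: loop_bracket_diff_right elt_scale_diff algebra_simps)
  also have "\<dots> \<in> onsager_ideal (2*l)"
    by (rule onsager_ideal_diff[OF assms(2) onsager_ideal_diff[OF
          onsager_ideal_bracket[OF Xel_0_in_Onsager D] onsager_ideal_scale[OF D]]])
  finally have "loop_bracket (Xel 0) ?y - elt_scale \<mu> ?y \<in> onsager_ideal (2*l)" .
  from onsager_ideal_diff[OF this eigen_comb_bracket_X0[of l a b c \<mu>]]
  have "eigen_comb l (\<lambda>j. - \<mu> * a j) (\<lambda>j. (4 - \<mu>) * b j) (\<lambda>j. (- (4 + \<mu>)) * c j)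
      \<in> onsager_ideal (2*l)"
    by simp
  then have "- \<mu> * a j = 0 \<and> (4 - \<mu>) * b j = 0 \<and> (- (4 + \<mu>)) * c j = 0" if "j \<in> {1..l}" for j
    using that by (rule eigen_comb_independent)
  with D show thesis
    by (intro that[of a b c]) (simp_all add: add_eq_0_iff)
qed

lemma eigenvalues:
  assumes "x \<in> Onsager" "x \<notin> onsager_ideal (2*l)"
    and "loop_bracket (Xel 0) x - elt_scale \<mu> x \<in> onsager_ideal (2*l)"
  shows "\<mu> \<in> {0, 4, -4}"
proof (rule ccontr)
  assume \<mu>: "\<mu> \<notin> {0, 4, -4}"
  obtain a b c where x: "x - eigen_comb l a b c \<in> onsager_ideal (2*l)"
    and coeffs: "\<And>j. j \<in> {1..l} \<Longrightarrow> \<mu> * a j = 0 \<and> (4 - \<mu>) * b j = 0 \<and> (4 + \<mu>) * c j = 0"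
    using eigen_comb_coeffs[OF assms(1,3)] by blast
  have "a j = 0 \<and> b j = 0 \<and> c j = 0" if "j \<in> {1..l}" for j
    using coeffs[OF that] \<mu> by (auto simp: add_eq_0_iff)
  then have "eigen_comb l a b c = 0"
    by (simp add: eigen_comb_def)
  with x assms(2) show False by simp
qed

lemma zero_eigenspace:
  assumes "x \<in> Onsager" "loop_bracket (Xel 0) x \<in> onsager_ideal (2*l)"
  shows "\<exists>a. x - (\<Sum>j=1..l. elt_scale (a j) (zero_vec l j)) \<in> onsager_ideal (2*l)"
proof -
  obtain a b c where x: "x - eigen_comb l a b c \<in> onsager_ideal (2*l)"
    and coeffs: "\<And>j. j \<in> {1..l} \<Longrightarrow> 0 * a j = 0 \<and> (4 - 0) * b j = 0 \<and> (4 + 0) * c j = 0"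
    using eigen_comb_coeffs[of x 0 l] assms by auto
  then have "eigen_comb l a b c = (\<Sum>j=1..l. elt_scale (a j) (zero_vec l j))"
    unfolding eigen_comb_def by (intro sum.cong) auto
  with x show ?thesis by auto
qed

lemma pm_eigenspace:
  assumes "s \<in> {1, -1}" "x \<in> Onsager"
    and "loop_bracket (Xel 0) x - elt_scale (4 * s) x \<in> onsager_ideal (2*l)"
  shows "\<exists>a. x - (\<Sum>j=1..l. elt_scale (a j) (pm_vec l s j)) \<in> onsager_ideal (2*l)"
proof -
  obtain a b c where x: "x - eigen_comb l a b c \<in> onsager_ideal (2*l)"
    and coeffs: "\<And>j. j \<in> {1..l} \<Longrightarrow> 4 * s * a j = 0 \<and> (4 - 4 * s) * b j = 0 \<and> (4 + 4 * s) * c j = 0"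
    using eigen_comb_coeffs[OF assms(2,3)] by blast
  show ?thesis
  proof (cases "s = 1")
    case True
    with coeffs have "eigen_comb l a b c = (\<Sum>j=1..l. elt_scale (b j) (pm_vec l s j))"
      unfolding eigen_comb_def by (intro sum.cong) auto
    with x show ?thesis by auto
  next
    case False
    with assms(1) coeffs have "eigen_comb l a b c = (\<Sum>j=1..l. elt_scale (c j) (pm_vec l s j))"
      unfolding eigen_comb_def by (intro sum.cong) auto
    with x show ?thesis by auto
  qed
qed

theorem lemma11:
  fixes l :: nat
  assumes "l \<ge> 1"
  shows
    \<comment> \<open>the listed vectors lie in OA and are eigenvectors of ad X_0 modulo the ideal\<close>
    "(\<forall>j\<in>{1..l}. zero_vec l j \<in> Onsager \<and>
        loop_bracket (Xel 0) (zero_vec l j) \<in> onsager_ideal (2*l))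
   \<and> (\<forall>j\<in>{1..l}. \<forall>s\<in>{1, -1}. pm_vec l s j \<in> Onsager \<and>
        loop_bracket (Xel 0) (pm_vec l s j) - elt_scale (4 * s) (pm_vec l s j) \<in> onsager_ideal (2*l))
   \<comment> \<open>together they are linearly independent in the quotient\<close>
   \<and> (\<forall>a b c :: nat \<Rightarrow> complex.
        (\<Sum>j=1..l. elt_scale (a j) (zero_vec l j) + elt_scale (b j) (pm_vec l 1 j)
                    + elt_scale (c j) (pm_vec l (-1) j)) \<in> onsager_ideal (2*l)
        \<longrightarrow> (\<forall>j\<in>{1..l}. a j = 0 \<and> b j = 0 \<and> c j = 0))
   \<comment> \<open>and span the quotient (ad X_0 is diagonalizable)\<close>
   \<and> (\<forall>x\<in>Onsager. \<exists>a b c :: nat \<Rightarrow> complex.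
        x - (\<Sum>j=1..l. elt_scale (a j) (zero_vec l j) + elt_scale (b j) (pm_vec l 1 j)
                    + elt_scale (c j) (pm_vec l (-1) j)) \<in> onsager_ideal (2*l))
   \<comment> \<open>the only eigenvalues are 0, 4, -4\<close>
   \<and> (\<forall>\<mu> :: complex. \<forall>x\<in>Onsager. x \<notin> onsager_ideal (2*l) \<and>
        loop_bracket (Xel 0) x - elt_scale \<mu> x \<in> onsager_ideal (2*l) \<longrightarrow> \<mu> \<in> {0, 4, -4})
   \<comment> \<open>each eigenspace is spanned by its listed vectors\<close>
   \<and> (\<forall>x\<in>Onsager. loop_bracket (Xel 0) x \<in> onsager_ideal (2*l) \<longrightarrow>
        (\<exists>a :: nat \<Rightarrow> complex. x - (\<Sum>j=1..l. elt_scale (a j) (zero_vec l j)) \<in> onsager_ideal (2*l)))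
   \<and> (\<forall>s\<in>{1, -1}. \<forall>x\<in>Onsager.
        loop_bracket (Xel 0) x - elt_scale (4 * s) x \<in> onsager_ideal (2*l) \<longrightarrow>
        (\<exists>a :: nat \<Rightarrow> complex. x - (\<Sum>j=1..l. elt_scale (a j) (pm_vec l s j)) \<in> onsager_ideal (2*l)))
   \<comment> \<open>the 0-eigenvectors commute\<close>
   \<and> (\<forall>i\<in>{1..l}. \<forall>j\<in>{1..l}. loop_bracket (zero_vec l i) (zero_vec l j) \<in> onsager_ideal (2*l))"
  apply (intro conjI)
  subgoal by (metis atLeastAtMost_iff zero_vec_eigen)
  subgoal by (metis atLeastAtMost_iff pm_vec_eigen)
  subgoal using eigen_comb_independent unfolding eigen_comb_def by blast
  subgoal using eigen_comb_span unfolding eigen_comb_def by blast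
  subgoal using eigenvalues by blast
  subgoal using zero_eigenspace by blast
  subgoal using pm_eigenspace by blast
  subgoal by (metis atLeastAtMost_iff zero_vecs_commute)
  done

end
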